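(* Let $K$ be a field of characteristic $p>0$, $k=\bigcap_{n\ge0}K^{p^n}$, with $K/k$ finitely generated. Let $W_1$ be a subfield with $K^p\subset W_1\subset K$. Then there exists a subfield $W_2\subset W_1$ with $K^{p^2}\subset W_2$, $W_2\cdot K^p=W_1$ and $[W_1:W_2]=[K:W_1]$; i.e. $(K,W_1,W_2,W_2,W_2,\dots)$ is a power tower on $K$ with $[K:W_1]=[W_1:W_2]$.
   Context: $K^{p^n}=\{x^{p^n}:x\in K\}$; $A\cdot B$ is the composite of subfields. A power tower on $K$ is a sequence of subfields $W_0,W_1,\ldots$ with $W_j=W_i\cdot K^{p^j}$ for all $0\le j\le i$. *)

theory Defs
  imports Main "HOL-Library.Extended_Nat"
begin

text \<open>The field K is the whole type 'a (a type of class field); subfields are subsets.\<close>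

definition is_subfield :: "'a::field set \<Rightarrow> bool" where
  "is_subfield S \<longleftrightarrow> 0 \<in> S \<and> 1 \<in> S \<and>
     (\<forall>x\<in>S. \<forall>y\<in>S. x + y \<in> S \<and> x - y \<in> S \<and> x * y \<in> S) \<and>
     (\<forall>x\<in>S. inverse x \<in> S)"

definition frob_pow :: "nat \<Rightarrow> 'a::field set" where
  "frob_pow n = (\<lambda>x. x ^ (CHAR('a) ^ n)) ` UNIV"

definition gen_field :: "'a::field set \<Rightarrow> 'a set" where
  "gen_field A = \<Inter> {S. is_subfield S \<and> A \<subseteq> S}"

definition composite :: "'a::field set \<Rightarrow> 'a set \<Rightarrow> 'a set" where
  "composite A B = gen_field (A \<union> B)"

definition fin_gen_over :: "'a::field set \<Rightarrow> bool" where
  "fin_gen_over F \<longleftrightarrow> (\<exists>S. finite S \<and> gen_field (F \<union> S) = UNIV)"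

definition lin_span :: "'a::field set \<Rightarrow> 'a set \<Rightarrow> 'a set" where
  "lin_span F B = {\<Sum>b\<in>T. c b * b | T c. finite T \<and> T \<subseteq> B \<and> (\<forall>b\<in>T. c b \<in> F)}"

definition lin_indep :: "'a::field set \<Rightarrow> 'a set \<Rightarrow> bool" where
  "lin_indep F B \<longleftrightarrow> (\<forall>T c. finite T \<and> T \<subseteq> B \<and> (\<forall>b\<in>T. c b \<in> F) \<and>
      (\<Sum>b\<in>T. c b * b) = 0 \<longrightarrow> (\<forall>b\<in>T. c b = 0))"

definition is_basis :: "'a::field set \<Rightarrow> 'a set \<Rightarrow> 'a set \<Rightarrow> bool" where
  "is_basis F E B \<longleftrightarrow> B \<subseteq> E \<and> lin_indep F B \<and> lin_span F B = E"

definition ext_degree :: "'a::field set \<Rightarrow> 'a set \<Rightarrow> enat" where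
  "ext_degree E F = (if \<exists>B. finite B \<and> is_basis F E B
      then enat (card (SOME B. finite B \<and> is_basis F E B)) else \<infinity>)"

end

(*
  Take Y with W_1 = K^p(Y) and X with K = W_1(X), both p-independent, so that
  [W_1 : K^p] = p^|Y| and [K : W_1] = p^|X|, and put W_2 = K^(p^2)(Y).  Then W_2 K^p = W_1
  and W_1 = W_2(X^p), whence [W_1 : W_2] <= p^|X|.  Since Frobenius maps K isomorphically
  onto K^p, [K^p : K^(p^2)] = [K : K^p], so [W_1 : K^(p^2)] = p^(2|Y| + |X|).  Along the
  chain K^(p^2) <= W_1^p <= W_2 <= W_1, where W_1^p = K^(p^2)(Y^p), the three degrees are
  p^|Y|, at most p^|Y| and at most p^|X|; so all bounds are attained and
  [W_1 : W_2] = p^|X| = [K : W_1].  Finite generation over k, which lies in K^p, is only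
  needed to make these degrees finite.
*)

theory Submission
  imports Defs "HOL-Algebra.Embedded_Algebras" "HOL-Computational_Algebra.Primes"
    "HOL-Computational_Algebra.Polynomial"
begin

(* The type itself as an HOL-Algebra ring, so that the linear algebra of Embedded_Algebras
   (dimension, telescopic bases) applies to its subfields. *)
definition ambient_ring :: "'a::field ring" where
  "ambient_ring = \<lparr>carrier = UNIV, monoid.mult = (*), one = 1, ring.zero = 0, add = (+)\<rparr>"

lemma ambient_ring_simps [simp]:
  "carrier ambient_ring = UNIV" "monoid.mult ambient_ring = (*)" "monoid.one ambient_ring = 1"
  "ring.zero ambient_ring = 0" "ring.add ambient_ring = (+)"
  by (simp_all add: ambient_ring_def)

lemma field_ambient_ring: "field (ambient_ring :: 'a::field ring)"
proof -
  have "\<exists>y. x + y = 0" for x :: 'a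
    using add.right_inverse by blast
  moreover have "x \<noteq> 0 \<Longrightarrow> \<exists>y. x * y = 1" for x :: 'a
    by (rule exI[of _ "inverse x"]) auto
  ultimately show ?thesis
    unfolding ambient_ring_def
    by unfold_locales (auto simp: algebra_simps Units_def)
qed

interpretation K: field "ambient_ring :: 'a::field ring"
  by (rule field_ambient_ring)

lemma ambient_ring_inv: "(x::'a::field) \<noteq> 0 \<Longrightarrow> inv\<^bsub>ambient_ring\<^esub> x = inverse x"
  by (metis K.comm_inv_char ambient_ring_simps(1-3) UNIV_I right_inverse)

lemma ambient_ring_uminus [simp]: "\<ominus>\<^bsub>ambient_ring\<^esub> (x::'a::field) = - x"
  by (rule K.minus_equality) auto

lemma is_subfield_zero: "is_subfield S \<Longrightarrow> 0 \<in> S"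
  and is_subfield_one: "is_subfield S \<Longrightarrow> 1 \<in> S"
  and is_subfield_add: "is_subfield S \<Longrightarrow> x \<in> S \<Longrightarrow> y \<in> S \<Longrightarrow> x + y \<in> S"
  and is_subfield_diff: "is_subfield S \<Longrightarrow> x \<in> S \<Longrightarrow> y \<in> S \<Longrightarrow> x - y \<in> S"
  and is_subfield_mult: "is_subfield S \<Longrightarrow> x \<in> S \<Longrightarrow> y \<in> S \<Longrightarrow> x * y \<in> S"
  and is_subfield_inverse: "is_subfield S \<Longrightarrow> x \<in> S \<Longrightarrow> inverse x \<in> S"
  by (simp_all add: is_subfield_def)

lemma is_subfield_uminus: "is_subfield S \<Longrightarrow> x \<in> S \<Longrightarrow> - x \<in> S"
  using is_subfield_diff[of S 0 x] is_subfield_zero[of S] by simp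

lemma is_subfield_divide: "is_subfield S \<Longrightarrow> x \<in> S \<Longrightarrow> y \<in> S \<Longrightarrow> x / y \<in> S"
  by (simp add: divide_inverse is_subfield_mult is_subfield_inverse)

lemma is_subfield_power: "is_subfield S \<Longrightarrow> x \<in> S \<Longrightarrow> x ^ n \<in> S"
  by (induction n) (auto intro: is_subfield_one is_subfield_mult)

lemma is_subfield_sum: "is_subfield S \<Longrightarrow> (\<And>x. x \<in> A \<Longrightarrow> f x \<in> S) \<Longrightarrow> sum f A \<in> S"
  by (induction A rule: infinite_finite_induct) (auto intro: is_subfield_zero is_subfield_add)

lemma is_subfield_of_nat: "is_subfield S \<Longrightarrow> of_nat n \<in> S"
  by (induction n) (auto intro: is_subfield_zero is_subfield_one is_subfield_add)

lemma is_subfield_UNIV: "is_subfield (UNIV :: 'a::field set)"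
  by (simp add: is_subfield_def)

lemma subfield_ambient_ring: "is_subfield S \<Longrightarrow> subfield S ambient_ring"
proof (rule K.subfieldI')
  assume S: "is_subfield S"
  show "subring S ambient_ring"
    by (rule K.subringI)
      (auto intro: is_subfield_one is_subfield_mult is_subfield_add is_subfield_uminus S)
  show "inv\<^bsub>ambient_ring\<^esub> k \<in> S" if "k \<in> S - {\<zero>\<^bsub>ambient_ring\<^esub>}" for k
    using that ambient_ring_inv[of k] is_subfield_inverse[OF S, of k] by auto
qed

lemma subalgebra_ambient_ring:
  assumes "is_subfield F" "is_subfield E" "F \<subseteq> E"
  shows "subalgebra F E ambient_ring"
proof -
  have "subgroup E (add_monoid ambient_ring)"
    using subring.axioms(1)[OF subfieldE(1)[OF subfield_ambient_ring[OF assms(2)]]] .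
  then show ?thesis
    unfolding subalgebra_def subalgebra_axioms_def using assms by (auto intro: is_subfield_mult)
qed

lemma is_subfield_gen_field: "is_subfield (gen_field A)"
  unfolding gen_field_def is_subfield_def by auto

lemma gen_field_superset: "A \<subseteq> gen_field A"
  unfolding gen_field_def by auto

lemma gen_field_least: "is_subfield S \<Longrightarrow> A \<subseteq> S \<Longrightarrow> gen_field A \<subseteq> S"
  unfolding gen_field_def by auto

lemma gen_field_mono: "A \<subseteq> B \<Longrightarrow> gen_field A \<subseteq> gen_field B"
  by (meson gen_field_superset gen_field_least is_subfield_gen_field order_trans)

lemma gen_field_eq: "is_subfield S \<Longrightarrow> gen_field S = S"
  by (simp add: gen_field_superset gen_field_least subset_antisym)

lemma gen_field_Un_gen_field: "gen_field (gen_field A \<union> B) = gen_field (A \<union> B)"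
proof
  show "gen_field (gen_field A \<union> B) \<subseteq> gen_field (A \<union> B)"
    by (intro gen_field_least is_subfield_gen_field)
      (meson gen_field_superset gen_field_mono le_sup_iff sup_ge1 sup_ge2 order_trans)
  show "gen_field (A \<union> B) \<subseteq> gen_field (gen_field A \<union> B)"
    by (intro gen_field_mono) (use gen_field_superset in blast)
qed

lemma gen_field_Un_absorb: "B \<subseteq> gen_field A \<Longrightarrow> gen_field (A \<union> B) = gen_field A"
  by (metis gen_field_Un_gen_field gen_field_eq is_subfield_gen_field sup.absorb1)

lemma lin_span_insert:
  assumes F: "is_subfield F" and u: "u \<notin> B"
  shows "lin_span F (insert u B) = {k * u + v | k v. k \<in> F \<and> v \<in> lin_span F B}"
proof safe
  fix x assume "x \<in> lin_span F (insert u B)"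
  then obtain T c where T: "x = (\<Sum>b\<in>T. c b * b)" "finite T" "T \<subseteq> insert u B" "\<forall>b\<in>T. c b \<in> F"
    unfolding lin_span_def by blast
  show "\<exists>k v. x = k * u + v \<and> k \<in> F \<and> v \<in> lin_span F B"
  proof (cases "u \<in> T")
    case True
    have "x = c u * u + (\<Sum>b\<in>T - {u}. c b * b)"
      using T True by (simp add: sum.remove)
    moreover have "(\<Sum>b\<in>T - {u}. c b * b) \<in> lin_span F B"
      unfolding lin_span_def using T by blast
    ultimately show ?thesis using T True by blast
  next
    case False
    then have "x \<in> lin_span F B"
      unfolding lin_span_def using T by blast
    then show ?thesis using is_subfield_zero[OF F] by force
  qed
next
  fix k v assume k: "k \<in> F" and "v \<in> lin_span F B"
  then obtain T c where T: "v = (\<Sum>b\<in>T. c b * b)" "finite T" "T \<subseteq> B" "\<forall>b\<in>T. c b \<in> F"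
    unfolding lin_span_def by blast
  have "u \<notin> T" using T u by blast
  then have "k * u + v = (\<Sum>b\<in>insert u T. (c(u := k)) b * b)"
    using T by simp (intro sum.cong, auto)
  moreover have "\<forall>b\<in>insert u T. (c(u := k)) b \<in> F" using T k by auto
  ultimately show "k * u + v \<in> lin_span F (insert u B)"
    unfolding lin_span_def using T by blast
qed

lemma lin_span_eq_Span:
  assumes F: "is_subfield F" and "distinct Us"
  shows "lin_span F (set Us) = K.Span F Us"
  using assms(2)
proof (induction Us)
  case Nil
  then show ?case by (simp add: lin_span_def)
next
  case (Cons u Us)
  have "K.Span F (u # Us) = K.line_extension F u (K.Span F Us)" by simp
  then show ?case
    using Cons
    by (auto simp: lin_span_insert[OF F] K.line_extension_mem_iff simp del: K.Span.simps) blast+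
qed

lemma mem_lin_span_if_nonzero_coeff:
  assumes F: "is_subfield F" and T: "finite T" "T - {u} \<subseteq> B" "\<forall>b\<in>T. c b \<in> F"
    and comb: "(\<Sum>b\<in>T. c b * b) = 0" and u: "u \<in> T" "c u \<noteq> 0"
  shows "u \<in> lin_span F B"
proof -
  have "c u * u + (\<Sum>b\<in>T - {u}. c b * b) = 0"
    using T(1) u(1) comb sum.remove[of T u "\<lambda>b. c b * b"] by simp
  then have "u = - (\<Sum>b\<in>T - {u}. c b * b) / c u"
    using u(2) by (simp add: eq_neg_iff_add_eq_0 field_simps)
  also have "\<dots> = (\<Sum>b\<in>T - {u}. (- c b / c u) * b)"
    by (simp add: sum_divide_distrib flip: sum_negf)
  finally have u_eq: "u = (\<Sum>b\<in>T - {u}. (- c b / c u) * b)" .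
  have "\<forall>b\<in>T - {u}. - c b / c u \<in> F"
    using T(3) u F by (auto intro!: is_subfield_divide is_subfield_uminus)
  then show ?thesis
    unfolding lin_span_def mem_Collect_eq using T u_eq
    by (intro exI[of _ "T - {u}"] exI[of _ "\<lambda>b. - c b / c u"]) auto
qed

lemma lin_indep_insert:
  assumes F: "is_subfield F" and u: "u \<notin> B"
  shows "lin_indep F (insert u B) \<longleftrightarrow> u \<notin> lin_span F B \<and> lin_indep F B"
proof safe
  assume indep: "lin_indep F (insert u B)"
  then show "lin_indep F B"
    unfolding lin_indep_def by blast
  assume "u \<in> lin_span F B"
  then obtain T c where T: "u = (\<Sum>b\<in>T. c b * b)" "finite T" "T \<subseteq> B" "\<forall>b\<in>T. c b \<in> F"
    unfolding lin_span_def by blast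
  have "u \<notin> T" using T u by blast
  then have "(\<Sum>b\<in>insert u T. (c(u := -1)) b * b) = - u + (\<Sum>b\<in>T. c b * b)"
    using T by simp (intro sum.cong, auto)
  also have "\<dots> = 0" using T by simp
  finally have "(\<Sum>b\<in>insert u T. (c(u := -1)) b * b) = 0" .
  moreover have "\<forall>b\<in>insert u T. (c(u := -1)) b \<in> F"
    using T is_subfield_uminus[OF F is_subfield_one[OF F]] by auto
  ultimately have "\<forall>b\<in>insert u T. (c(u := -1)) b = 0"
    using indep T unfolding lin_indep_def by (meson insert_mono finite_insert)
  then show False by simp
next
  assume u_notin: "u \<notin> lin_span F B" and indep: "lin_indep F B"
  show "lin_indep F (insert u B)"
    unfolding lin_indep_def
  proof (intro allI impI)
    fix T c
    assume T: "finite T \<and> T \<subseteq> insert u B \<and> (\<forall>b\<in>T. c b \<in> F) \<and> (\<Sum>b\<in>T. c b * b) = 0"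
    have cu: "c u = 0" if "u \<in> T"
      using mem_lin_span_if_nonzero_coeff[OF F, of T u B c] T that u_notin by blast
    then have "(\<Sum>b\<in>T - {u}. c b * b) = 0"
      using T by (cases "u \<in> T") (auto simp: sum.remove)
    moreover have "finite (T - {u})" "T - {u} \<subseteq> B" "\<forall>b\<in>T - {u}. c b \<in> F"
      using T by auto
    ultimately have "\<forall>b\<in>T - {u}. c b = 0"
      using indep unfolding lin_indep_def by blast
    then show "\<forall>b\<in>T. c b = 0" using cu by blast
  qed
qed

lemma lin_indep_iff_independent:
  assumes F: "is_subfield F" and "distinct Us"
  shows "lin_indep F (set Us) \<longleftrightarrow> K.independent F Us"
  using assms(2)
proof (induction Us)
  case Nil
  then show ?case by (simp add: lin_indep_def)
next
  case (Cons u Us)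
  have "K.independent F (u # Us) \<longleftrightarrow> u \<notin> K.Span F Us \<and> K.independent F Us"
    using K.independent_backwards[of F u Us] K.independent.li_Cons[of u F Us] by auto
  then show ?case
    using Cons lin_indep_insert[OF F, of u "set Us"] lin_span_eq_Span[OF F, of Us] by auto
qed

lemma dimension_card_lin_basis:
  assumes F: "is_subfield F" and B: "finite B" "lin_indep F B" "lin_span F B = E"
  shows "K.dimension (card B) F E"
proof -
  obtain Us where Us: "set Us = B" "distinct Us"
    using finite_distinct_list[OF B(1)] by blast
  have "K.independent F Us"
    using lin_indep_iff_independent[OF F Us(2)] Us B by simp
  then have "K.dimension (length Us) F (K.Span F Us)"
    by (rule K.dimension_independent)
  then show ?thesis
    using lin_span_eq_Span[OF F Us(2)] Us B distinct_card by fastforce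
qed

lemma ext_degree_eqI:
  assumes F: "is_subfield F" and dim: "K.dimension n F E"
  shows "ext_degree E F = enat n"
proof -
  obtain Us where Us: "set Us \<subseteq> carrier ambient_ring" "K.independent F Us" "length Us = n"
      "K.Span F Us = E"
    using K.exists_base[OF subfield_ambient_ring[OF F] dim] by blast
  have "distinct Us"
    using K.independent_distinct[OF subfield_ambient_ring[OF F] Us(2)] .
  then have "is_basis F E (set Us)"
    unfolding is_basis_def
    using lin_indep_iff_independent[OF F] lin_span_eq_Span[OF F] Us
      K.Span_base_incl[OF subfield_ambient_ring[OF F] Us(1)]
    by auto
  then have ex: "\<exists>B. finite B \<and> is_basis F E B" by blast
  define B where "B = (SOME B. finite B \<and> is_basis F E B)"
  have "finite B \<and> is_basis F E B"
    unfolding B_def using someI_ex[OF ex] .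
  then have "K.dimension (card B) F E"
    using dimension_card_lin_basis[OF F] unfolding is_basis_def by blast
  then have "card B = n"
    using K.dimension_is_inj[OF subfield_ambient_ring[OF F] _ dim] by blast
  then show ?thesis
    using ex unfolding ext_degree_def B_def by simp
qed

section \<open>The Frobenius endomorphism\<close>

definition frob :: "'a::field \<Rightarrow> 'a" where
  "frob x = x ^ CHAR('a)"

context
  assumes char_pos: "CHAR('a::field) > 0"
begin

lemma frob_zero [simp]: "frob (0::'a) = 0"
  unfolding frob_def using char_pos by simp

lemma frob_one [simp]: "frob (1::'a) = 1"
  unfolding frob_def by simp

lemma frob_add: "frob ((x::'a) + y) = frob x + frob y"
  unfolding frob_def using freshmans_dream[OF prime_CHAR_semidom[OF char_pos]] by simp

lemma frob_mult: "frob ((x::'a) * y) = frob x * frob y"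
  unfolding frob_def by (simp add: power_mult_distrib)

lemma frob_diff: "frob ((x::'a) - y) = frob x - frob y"
  using frob_add[of "x - y" y] by simp

lemma frob_inverse: "frob (inverse (x::'a)) = inverse (frob x)"
  unfolding frob_def by (simp add: power_inverse)

lemma inj_frob: "inj (frob :: 'a \<Rightarrow> 'a)"
proof (rule injI)
  fix x y :: 'a
  assume "frob x = frob y"
  then have "frob (x - y) = 0" by (simp add: frob_diff)
  then show "x = y" unfolding frob_def using char_pos by simp
qed

lemma is_subfield_frob_image:
  assumes S: "is_subfield (S::'a set)"
  shows "is_subfield (frob ` S)"
  unfolding is_subfield_def
proof (intro conjI ballI)
  show "0 \<in> frob ` S"
    by (rule rev_image_eqI[OF is_subfield_zero[OF S]]) simp
  show "1 \<in> frob ` S"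
    by (rule rev_image_eqI[OF is_subfield_one[OF S]]) simp
next
  fix x y assume "x \<in> frob ` S" "y \<in> frob ` S"
  then obtain a b where "a \<in> S" "b \<in> S" "x = frob a" "y = frob b" by blast
  then show "x + y \<in> frob ` S" "x - y \<in> frob ` S" "x * y \<in> frob ` S"
    by (auto simp flip: frob_add frob_diff frob_mult
        intro!: imageI is_subfield_add is_subfield_diff is_subfield_mult S)
next
  fix x assume "x \<in> frob ` S"
  then obtain a where "a \<in> S" "x = frob a" by blast
  then show "inverse x \<in> frob ` S"
    by (auto simp flip: frob_inverse intro!: imageI is_subfield_inverse S)
qed

lemma frob_image_gen_field: "frob ` gen_field A = gen_field (frob ` (A :: 'a set))"
proof
  show "gen_field (frob ` A) \<subseteq> frob ` gen_field A"
    by (intro gen_field_least is_subfield_frob_image is_subfield_gen_field image_mono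
        gen_field_superset)
  have "is_subfield {x. frob x \<in> gen_field (frob ` A)}"
    using is_subfield_gen_field[of "frob ` A"] unfolding is_subfield_def
    by (auto simp: frob_add frob_diff frob_mult frob_inverse)
  then have "gen_field A \<subseteq> {x. frob x \<in> gen_field (frob ` A)}"
    using gen_field_superset[of "frob ` A"] by (intro gen_field_least) auto
  then show "frob ` gen_field A \<subseteq> gen_field (frob ` A)" by blast
qed

lemma dimension_frob_image:
  assumes F: "is_subfield F" and dim: "K.dimension n F E"
  shows "K.dimension n (frob ` F) (frob ` (E :: 'a set))"
proof -
  have "ring_hom_ring ambient_ring ambient_ring (frob :: 'a \<Rightarrow> 'a)"
    by (rule ring_hom_ringI2) (auto simp: ring_hom_def frob_add frob_mult intro: K.ring_axioms)
  from ring_hom_ring.inj_hom_dimension[OF this subfield_ambient_ring[OF F] _ _ dim]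
  show ?thesis
    using inj_on_subset[OF inj_frob] by simp
qed

lemma frob_pow_1_eq: "frob_pow 1 = range (frob :: 'a \<Rightarrow> 'a)"
  unfolding frob_pow_def frob_def by simp

lemma frob_pow_2_eq: "frob_pow 2 = frob ` (frob_pow 1 :: 'a set)"
  unfolding frob_pow_def frob_def by (auto simp: power2_eq_square power_mult image_image)

lemma is_subfield_frob_pow_1: "is_subfield (frob_pow 1 :: 'a set)"
  unfolding frob_pow_1_eq using is_subfield_frob_image[OF is_subfield_UNIV] .

lemma is_subfield_frob_pow_2: "is_subfield (frob_pow 2 :: 'a set)"
  unfolding frob_pow_2_eq using is_subfield_frob_image[OF is_subfield_frob_pow_1] .

lemma frob_pow_2_subset_frob_pow_1: "(frob_pow 2 :: 'a set) \<subseteq> frob_pow 1"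
  unfolding frob_pow_2_eq frob_pow_1_eq by auto

lemma power_CHAR_in_frob_pow_1: "(x::'a) ^ CHAR('a) \<in> frob_pow 1"
  unfolding frob_pow_def by simp

end

definition poly_over :: "'a::field set \<Rightarrow> 'a poly \<Rightarrow> bool" where
  "poly_over L f \<longleftrightarrow> (\<forall>i. coeff f i \<in> L)"

context
  fixes L :: "'a::field set"
  assumes L: "is_subfield L"
begin

lemma poly_over_const: "c \<in> L \<Longrightarrow> poly_over L [:c:]"
  unfolding poly_over_def using is_subfield_zero[OF L] by (simp add: coeff_pCons split: nat.split)

lemma poly_over_monom: "c \<in> L \<Longrightarrow> poly_over L (monom c n)"
  unfolding poly_over_def using is_subfield_zero[OF L] by simp

lemma poly_over_add: "poly_over L f \<Longrightarrow> poly_over L g \<Longrightarrow> poly_over L (f + g)"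
  unfolding poly_over_def using is_subfield_add[OF L] by simp

lemma poly_over_diff: "poly_over L f \<Longrightarrow> poly_over L g \<Longrightarrow> poly_over L (f - g)"
  unfolding poly_over_def using is_subfield_diff[OF L] by simp

lemma poly_over_smult: "c \<in> L \<Longrightarrow> poly_over L f \<Longrightarrow> poly_over L (smult c f)"
  unfolding poly_over_def using is_subfield_mult[OF L] by simp

lemma poly_over_mult: "poly_over L f \<Longrightarrow> poly_over L g \<Longrightarrow> poly_over L (f * g)"
  unfolding poly_over_def
  by (auto simp: coeff_mult intro!: is_subfield_sum[OF L] is_subfield_mult[OF L])

lemma poly_over_power: "poly_over L f \<Longrightarrow> poly_over L (f ^ n)"
proof (induction n)
  case 0
  show ?case
    unfolding poly_over_def using is_subfield_zero[OF L] is_subfield_one[OF L] by simp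
qed (simp add: poly_over_mult)

lemma poly_over_mod_monic:
  assumes f: "poly_over L f" "lead_coeff f = 1" and g: "poly_over L g"
  shows "poly_over L (g mod f)"
  using g
proof (induction "degree g" arbitrary: g rule: less_induct)
  case less
  show ?case
  proof (cases "degree g < degree f")
    case True
    then show ?thesis using less.prems by (simp add: mod_poly_less)
  next
    case False
    define g' where "g' = g - monom (lead_coeff g) (degree g - degree f) * f"
    have mod_eq: "g mod f = g' mod f"
      unfolding g'_def by (simp add: mod_eq_dvd_iff)
    have "lead_coeff g \<in> L"
      using less.prems unfolding poly_over_def by blast
    then have g': "poly_over L g'"
      unfolding g'_def by (intro poly_over_diff poly_over_mult poly_over_monom less.prems f(1))
    have "degree (monom (lead_coeff g) (degree g - degree f) * f) \<le> degree g"
      using degree_mult_le[of "monom (lead_coeff g) (degree g - degree f)" f]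
        degree_monom_le[of "lead_coeff g" "degree g - degree f"] False
      by linarith
    then have "degree g' \<le> degree g"
      unfolding g'_def using degree_diff_le by blast
    moreover have "coeff g' (degree g) = 0"
      unfolding g'_def using f(2) False by (simp add: coeff_monom_mult)
    ultimately consider "g' = 0" | "degree g' < degree g"
      by (metis le_neq_implies_less leading_coeff_0_iff)
    then show ?thesis
    proof cases
      case 1
      then show ?thesis
        unfolding mod_eq using is_subfield_zero[OF L] by (simp add: poly_over_def)
    next
      case 2
      then show ?thesis unfolding mod_eq using less.hyps g' by blast
    qed
  qed
qed

end

lemma monic_dvd_linear_power_imp_eq:
  fixes y :: "'a::field"
  assumes "f dvd [:-y, 1:] ^ n" and "lead_coeff f = 1"
  shows "f = [:-y, 1:] ^ degree f"
  using assms
proof (induction n arbitrary: f)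
  case 0
  then obtain c where "f = [:c:]"
    by (auto simp: is_unit_poly_iff)
  then show ?case
    using "0.prems"(2) by simp
next
  case (Suc n)
  then obtain g where fg: "[:-y, 1:] * [:-y, 1:] ^ n = f * g"
    by (metis dvdE power_Suc)
  have "poly f y * poly g y = 0"
    using arg_cong[OF fg, of "\<lambda>h. poly h y"] by simp
  then consider "poly f y = 0" | "poly g y = 0" by auto
  then show ?case
  proof cases
    case 1
    then obtain f' where f': "f = [:-y, 1:] * f'"
      by (metis dvdE poly_eq_0_iff_dvd)
    then have "[:-y, 1:] * (f' * g) = [:-y, 1:] * [:-y, 1:] ^ n"
      using fg by (simp only: mult.assoc)
    then have f'g: "f' * g = [:-y, 1:] ^ n"
      by (metis mult_left_cancel pCons_eq_0_iff one_neq_zero)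
    have "lead_coeff f' = 1"
      using Suc.prems(2) unfolding f' lead_coeff_mult by simp
    then have IH: "f' = [:-y, 1:] ^ degree f'"
      using Suc.IH f'g by (metis dvd_triv_left)
    have "f' \<noteq> 0"
      using f'g by (metis mult_zero_left power_not_zero pCons_eq_0_iff one_neq_zero)
    then have "degree f = Suc (degree f')"
      unfolding f' by (simp add: degree_mult_eq del: mult_pCons_left)
    then show ?thesis
      using f' IH by (metis power_Suc)
  next
    case 2
    then obtain g' where "g = [:-y, 1:] * g'"
      by (metis dvdE poly_eq_0_iff_dvd)
    then have "[:-y, 1:] * (f * g') = [:-y, 1:] * [:-y, 1:] ^ n"
      using fg by (simp only: mult.left_commute)
    then have "f * g' = [:-y, 1:] ^ n"
      by (metis mult_left_cancel pCons_eq_0_iff one_neq_zero)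
    then show ?thesis
      using Suc.IH Suc.prems(2) by (metis dvd_triv_left)
  qed
qed

lemma linear_power_CHAR:
  assumes "CHAR('a::field) > 0"
  shows "[:-y, 1:] ^ CHAR('a) = monom 1 CHAR('a) - [:(y::'a) ^ CHAR('a):]"
proof -
  have prime: "prime CHAR('a)"
    using prime_CHAR_semidom[OF assms] .
  have "[:-y, 1:] = monom 1 1 + [:-y:]"
    by (simp add: monom_Suc)
  then have "[:-y, 1:] ^ CHAR('a) = (monom 1 1 + [:-y:]) ^ CHAR('a poly)"
    by simp
  also have "\<dots> = monom 1 1 ^ CHAR('a poly) + [:-y:] ^ CHAR('a poly)"
    by (rule freshmans_dream) (use prime in simp_all)
  also have "\<dots> = monom 1 CHAR('a) + [:(-y) ^ CHAR('a):]"
    by (simp add: monom_power poly_const_pow)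
  also have "(-y) ^ CHAR('a) = - (y ^ CHAR('a))"
    using minus_power_prime_CHAR[OF refl prime] .
  finally show ?thesis by simp
qed

lemma poly_mod_eq_if_root: "poly f x = 0 \<Longrightarrow> poly (g mod f) x = poly g x"
  by (simp flip: minus_div_mult_eq_mod)

lemma coeff_linear_power_pred:
  fixes y :: "'a::comm_ring_1"
  assumes "d > 0"
  shows "coeff ([:-y, 1:] ^ d) (d - 1) = - (of_nat d * y)"
proof -
  have "d choose (d - 1) = d"
    using binomial_symmetric[of 1 d] assms by simp
  then show ?thesis
    using coeff_linear_poly_power[of "d - 1" d "-y" 1] assms by simp
qed

section \<open>Adjoining a \<open>p\<close>-th root\<close>

context
  fixes L :: "'a::field set" and y :: 'a
  assumes char_pos: "CHAR('a) > 0" and L: "is_subfield L" and y_pow: "y ^ CHAR('a) \<in> L"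
begin

lemma poly_over_linear_power_CHAR: "poly_over L ([:-y, 1:] ^ CHAR('a))"
  unfolding linear_power_CHAR[OF char_pos] using L y_pow
  by (intro poly_over_diff poly_over_monom poly_over_const is_subfield_one)

lemma power_CHAR_poly_in_subfield:
  assumes "poly_over L g"
  shows "poly g y ^ CHAR('a) \<in> L"
proof -
  have "poly g y ^ CHAR('a) = (\<Sum>i\<le>degree g. (coeff g i * y ^ i) ^ CHAR('a))"
    unfolding poly_altdef by (rule freshmans_dream_sum[OF prime_CHAR_semidom[OF char_pos] refl])
  also have "\<dots> = (\<Sum>i\<le>degree g. coeff g i ^ CHAR('a) * (y ^ CHAR('a)) ^ i)"
    by (simp add: power_mult_distrib flip: power_mult) (simp add: mult.commute)
  also have "\<dots> \<in> L"
    using assms y_pow unfolding poly_over_def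
    by (intro is_subfield_sum[OF L] is_subfield_mult[OF L] is_subfield_power[OF L y_pow]
        is_subfield_power[OF L]) auto
  finally show ?thesis .
qed

lemma is_subfield_poly_image: "is_subfield {poly g y | g. poly_over L g}"
  unfolding is_subfield_def
proof (intro conjI ballI)
  have mem: "poly g y \<in> {poly g y | g. poly_over L g}" if "poly_over L g" for g
    using that by blast
  show "0 \<in> {poly g y | g. poly_over L g}" "1 \<in> {poly g y | g. poly_over L g}"
    using mem[OF poly_over_const[OF L is_subfield_zero[OF L]]]
      mem[OF poly_over_const[OF L is_subfield_one[OF L]]] by simp_all
  fix a b assume "a \<in> {poly g y | g. poly_over L g}" "b \<in> {poly g y | g. poly_over L g}"
  then obtain f g where fg: "poly_over L f" "poly_over L g" "a = poly f y" "b = poly g y" by blast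
  show "a + b \<in> {poly g y | g. poly_over L g}" "a - b \<in> {poly g y | g. poly_over L g}"
      "a * b \<in> {poly g y | g. poly_over L g}"
    using mem[OF poly_over_add[OF L fg(1,2)]] mem[OF poly_over_diff[OF L fg(1,2)]]
      mem[OF poly_over_mult[OF L fg(1,2)]] fg(3,4) by simp_all
next
  fix a assume "a \<in> {poly g y | g. poly_over L g}"
  then obtain f where f: "poly_over L f" "a = poly f y" by blast
  have c: "inverse (a ^ CHAR('a)) \<in> L"
    using power_CHAR_poly_in_subfield[OF f(1)] f(2) is_subfield_inverse[OF L] by simp
  have "a ^ CHAR('a) = a ^ (CHAR('a) - 1) * a"
    using power_Suc2[of a "CHAR('a) - 1"] char_pos by simp
  then have "inverse a = a ^ (CHAR('a) - 1) * inverse (a ^ CHAR('a))"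
    using char_pos by (cases "a = 0") (simp_all add: field_simps)
  also have "\<dots> = poly (f ^ (CHAR('a) - 1) * [:inverse (a ^ CHAR('a)):]) y"
    unfolding poly_mult poly_power f(2) by simp
  finally show "inverse a \<in> {poly g y | g. poly_over L g}"
    using poly_over_mult[OF L poly_over_power[OF L f(1)] poly_over_const[OF L c]] by blast
qed

lemma gen_field_insert_eq_poly_image: "gen_field (insert y L) = {poly g y | g. poly_over L g}"
proof
  have mem: "poly g y \<in> {poly g y | g. poly_over L g}" if "poly_over L g" for g
    using that by blast
  have "insert y L \<subseteq> {poly g y | g. poly_over L g}"
    using mem[OF poly_over_monom[OF L is_subfield_one[OF L], of 1]]
      mem[OF poly_over_const[OF L]] by (auto simp: poly_monom)
  then show "gen_field (insert y L) \<subseteq> {poly g y | g. poly_over L g}"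
    by (rule gen_field_least[OF is_subfield_poly_image])
  have "poly g y \<in> gen_field (insert y L)" if g: "poly_over L g" for g
  proof -
    have "L \<subseteq> gen_field (insert y L)" "y \<in> gen_field (insert y L)"
      using gen_field_superset by blast+
    then show ?thesis
      using g unfolding poly_altdef poly_over_def
      by (intro is_subfield_sum[OF is_subfield_gen_field] is_subfield_mult[OF is_subfield_gen_field]
          is_subfield_power[OF is_subfield_gen_field]) auto
  qed
  then show "{poly g y | g. poly_over L g} \<subseteq> gen_field (insert y L)"
    by blast
qed

lemma obtain_reduced_poly:
  assumes "a \<in> gen_field (insert y L)"
  obtains h where "poly_over L h" "degree h < CHAR('a)" "a = poly h y"
proof -
  obtain g where g: "poly_over L g" "a = poly g y"
    using assms unfolding gen_field_insert_eq_poly_image by blast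
  define h where "h = g mod [:-y, 1:] ^ CHAR('a)"
  have "poly_over L h"
    unfolding h_def using poly_over_mod_monic[OF L poly_over_linear_power_CHAR _ g(1)]
    by (simp add: lead_coeff_power)
  moreover have "degree h < CHAR('a)"
    unfolding h_def using char_pos degree_mod_less[of "[:-y, 1:] ^ CHAR('a)" g]
    by (auto simp: degree_linear_power)
  moreover have "a = poly h y"
    unfolding h_def using g(2) char_pos by (simp add: poly_mod_eq_if_root)
  ultimately show ?thesis
    using that by blast
qed

lemma least_root_poly_dvd_linear_power_CHAR:
  assumes m: "poly_over L m" "lead_coeff m = 1" "poly m y = 0"
    and least: "\<And>g. poly_over L g \<Longrightarrow> g \<noteq> 0 \<Longrightarrow> poly g y = 0 \<Longrightarrow> degree m \<le> degree g"
  shows "m dvd [:-y, 1:] ^ CHAR('a)"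
proof -
  let ?r = "[:-y, 1:] ^ CHAR('a) mod m"
  have "poly ?r y = 0"
    using poly_mod_eq_if_root[OF m(3)] char_pos by simp
  moreover have "poly_over L ?r"
    by (rule poly_over_mod_monic[OF L m(1,2) poly_over_linear_power_CHAR])
  moreover have "?r = 0 \<or> degree ?r < degree m"
    using m(2) by (intro degree_mod_less) auto
  ultimately have "?r = 0"
    using least[of ?r] by (meson not_le)
  then show ?thesis
    by (rule mod_0_imp_dvd)
qed

text \<open>The minimal polynomial of \<open>y\<close> over \<open>L\<close> divides \<open>(X - y)\<^sup>p\<close>, so it is \<open>(X - y)\<^sup>d\<close>; its
  coefficient \<open>-d y\<close> lies in \<open>L\<close>, which forces \<open>d = p\<close> unless \<open>y \<in> L\<close>.\<close>

lemma CHAR_le_degree_if_poly_root: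
  assumes y_notin: "y \<notin> L" and f: "poly_over L f" "f \<noteq> 0" "poly f y = 0"
  shows "CHAR('a) \<le> degree f"
proof -
  let ?P = "\<lambda>f. poly_over L f \<and> f \<noteq> 0 \<and> poly f y = 0"
  obtain f0 where f0: "?P f0" and least: "\<And>g. ?P g \<Longrightarrow> degree f0 \<le> degree g"
    using ex_has_least_nat[of ?P f degree] f by blast
  define m where "m = smult (inverse (lead_coeff f0)) f0"
  have "lead_coeff f0 \<in> L"
    using f0 unfolding poly_over_def by blast
  then have m: "poly_over L m" "lead_coeff m = 1" "degree m = degree f0" "poly m y = 0"
    unfolding m_def using f0 poly_over_smult[OF L is_subfield_inverse[OF L]] by auto
  have "m dvd [:-y, 1:] ^ CHAR('a)"
    using least m(3) by (intro least_root_poly_dvd_linear_power_CHAR[OF m(1,2,4)]) auto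
  define d where "d = degree m"
  have m_eq: "m = [:-y, 1:] ^ d"
    unfolding d_def by (rule monic_dvd_linear_power_imp_eq[OF \<open>m dvd _\<close> m(2)])
  have "d > 0"
  proof (rule ccontr)
    assume "\<not> d > 0"
    then have "m = 1" using m_eq by simp
    then show False using m(4) by simp
  qed
  have "coeff m (d - 1) \<in> L"
    using m(1) unfolding poly_over_def by blast
  then have dy: "of_nat d * y \<in> L"
    using is_subfield_uminus[OF L, of "coeff m (d - 1)"]
      coeff_linear_power_pred[where y = y, OF \<open>d > 0\<close>]
    unfolding m_eq by simp
  show ?thesis
  proof (rule ccontr)
    assume "\<not> CHAR('a) \<le> degree f"
    then have "d < CHAR('a)"
      using least[of f] f m(3) d_def by simp
    then have "(of_nat d :: 'a) \<noteq> 0"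
      using \<open>d > 0\<close> by (auto simp: of_nat_eq_0_iff_char_dvd dest: nat_dvd_not_less)
    then have "y = (of_nat d * y) / of_nat d" by simp
    also have "\<dots> \<in> L"
      by (rule is_subfield_divide[OF L dy is_subfield_of_nat[OF L]])
    finally show False using y_notin by simp
  qed
qed

lemma inj_on_powers:
  assumes "y \<notin> L"
  shows "inj_on (\<lambda>i. y ^ i) {..<CHAR('a)}"
proof -
  have "y ^ i \<noteq> y ^ j" if ij: "i < j" "j < CHAR('a)" for i j
  proof
    assume eq: "y ^ i = y ^ j"
    define f where "f = monom (1::'a) j - monom 1 i"
    have "poly_over L f"
      unfolding f_def by (intro poly_over_diff[OF L] poly_over_monom[OF L] is_subfield_one[OF L])
    moreover have "coeff f j = 1"
      unfolding f_def using ij by simp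
    moreover have "poly f y = 0"
      unfolding f_def using eq by (simp add: poly_monom)
    moreover have "degree f \<le> j"
      unfolding f_def by (rule degree_le) (use ij in auto)
    ultimately show False
      using CHAR_le_degree_if_poly_root[OF assms, of f] ij by fastforce
  qed
  then show ?thesis
    by (intro inj_onI) (metis lessThan_iff linorder_neqE_nat)
qed

lemma lin_indep_powers:
  assumes y_notin: "y \<notin> L"
  shows "lin_indep L ((\<lambda>i. y ^ i) ` {..<CHAR('a)})"
  unfolding lin_indep_def
proof (intro allI impI)
  fix T c
  assume T: "finite T \<and> T \<subseteq> (\<lambda>i. y ^ i) ` {..<CHAR('a)} \<and> (\<forall>b\<in>T. c b \<in> L)
    \<and> (\<Sum>b\<in>T. c b * b) = 0"
  define I where "I = {i \<in> {..<CHAR('a)}. y ^ i \<in> T}"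
  have T_eq: "T = (\<lambda>i. y ^ i) ` I"
    unfolding I_def using T by blast
  have inj: "inj_on (\<lambda>i. y ^ i) I"
    using inj_on_powers[OF y_notin] unfolding I_def by (rule inj_on_subset) auto
  define e where "e i = (if y ^ i \<in> T then c (y ^ i) else 0)" for i
  define f where "f = (\<Sum>i<CHAR('a). monom (e i) i)"
  have coeff_f: "coeff f k = (if k < CHAR('a) then e k else 0)" for k
    unfolding f_def by (simp add: coeff_sum)
  have "poly_over L f"
    unfolding poly_over_def coeff_f e_def using T is_subfield_zero[OF L] by auto
  have "poly f y = (\<Sum>i<CHAR('a). e i * y ^ i)"
    unfolding f_def by (simp add: poly_sum poly_monom)
  also have "\<dots> = (\<Sum>i<CHAR('a). if y ^ i \<in> T then c (y ^ i) * y ^ i else 0)"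
    unfolding e_def by (intro sum.cong) auto
  also have "\<dots> = (\<Sum>i\<in>I. c (y ^ i) * y ^ i)"
    unfolding I_def by (rule sum.inter_filter[symmetric]) simp
  also have "\<dots> = (\<Sum>b\<in>T. c b * b)"
    unfolding T_eq by (rule sum.reindex[OF inj, symmetric, unfolded comp_def])
  also have "\<dots> = 0"
    using T by simp
  finally have "poly f y = 0" .
  moreover have "degree f < CHAR('a)"
    using char_pos by (intro degree_lessI) (auto simp: coeff_f)
  ultimately have "f = 0"
    using CHAR_le_degree_if_poly_root[OF y_notin \<open>poly_over L f\<close>] by (meson not_le)
  show "\<forall>b\<in>T. c b = 0"
  proof
    fix b assume "b \<in> T"
    then obtain i where i: "i \<in> I" "b = y ^ i"
      using T_eq by blast
    then show "c b = 0"
      using coeff_f[of i] \<open>f = 0\<close> unfolding e_def I_def by simp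
  qed
qed

lemma lin_span_powers:
  assumes y_notin: "y \<notin> L"
  shows "lin_span L ((\<lambda>i. y ^ i) ` {..<CHAR('a)}) = gen_field (insert y L)"
proof
  let ?B = "(\<lambda>i. y ^ i) ` {..<CHAR('a)}"
  have "L \<subseteq> gen_field (insert y L)" "y \<in> gen_field (insert y L)"
    using gen_field_superset by blast+
  then show "lin_span L ?B \<subseteq> gen_field (insert y L)"
    unfolding lin_span_def
    by (auto intro!: is_subfield_sum[OF is_subfield_gen_field]
        is_subfield_mult[OF is_subfield_gen_field] is_subfield_power[OF is_subfield_gen_field])
  show "gen_field (insert y L) \<subseteq> lin_span L ?B"
  proof
    fix a assume "a \<in> gen_field (insert y L)"
    then obtain h where h: "poly_over L h" "degree h < CHAR('a)" "a = poly h y"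
      by (rule obtain_reduced_poly)
    define c where "c b = coeff h (the_inv_into {..<CHAR('a)} (\<lambda>i. y ^ i) b)" for b
    have "a = (\<Sum>i\<le>degree h. coeff h i * y ^ i)"
      unfolding h(3) poly_altdef ..
    also have "\<dots> = (\<Sum>i<CHAR('a). coeff h i * y ^ i)"
      by (rule sum.mono_neutral_left) (use h(2) in \<open>auto simp: coeff_eq_0\<close>)
    also have "\<dots> = (\<Sum>i<CHAR('a). c (y ^ i) * y ^ i)"
      unfolding c_def by (simp add: the_inv_into_f_f[OF inj_on_powers[OF y_notin]])
    also have "\<dots> = (\<Sum>b\<in>?B. c b * b)"
      by (rule sum.reindex[OF inj_on_powers[OF y_notin], symmetric, unfolded comp_def])
    finally have "a = (\<Sum>b\<in>?B. c b * b)" .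
    moreover have "\<forall>b\<in>?B. c b \<in> L"
      using h(1) unfolding c_def poly_over_def by blast
    ultimately show "a \<in> lin_span L ?B"
      unfolding lin_span_def by blast
  qed
qed

lemma dimension_gen_field_insert:
  assumes "y \<notin> L"
  shows "K.dimension CHAR('a) L (gen_field (insert y L))"
  using dimension_card_lin_basis[OF L _ lin_indep_powers[OF assms] lin_span_powers[OF assms]]
    card_image[OF inj_on_powers[OF assms]] by simp

end

section \<open>\<open>p\<close>-independence\<close>

text \<open>For \<open>Z\<^sup>p \<subseteq> L\<close> this is the usual \<open>p\<close>-independence of \<open>Z\<close> over \<open>L\<close>.\<close>

definition p_independent :: "'a::field set \<Rightarrow> 'a set \<Rightarrow> bool" where
  "p_independent L Z \<longleftrightarrow> (\<forall>z\<in>Z. z \<notin> gen_field (L \<union> (Z - {z})))"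

lemma p_independent_subset:
  assumes "p_independent L Z" "Z' \<subseteq> Z"
  shows "p_independent L Z'"
  unfolding p_independent_def
proof
  fix z assume "z \<in> Z'"
  have "gen_field (L \<union> (Z' - {z})) \<subseteq> gen_field (L \<union> (Z - {z}))"
    using assms(2) by (intro gen_field_mono) blast
  then show "z \<notin> gen_field (L \<union> (Z' - {z}))"
    using assms \<open>z \<in> Z'\<close> unfolding p_independent_def by blast
qed

lemma dimension_gen_field_p_independent:
  assumes char_pos: "CHAR('a::field) > 0" and L: "is_subfield (L::'a set)"
    and Z: "finite Z" "\<forall>z\<in>Z. z ^ CHAR('a) \<in> L" "p_independent L Z"
  shows "K.dimension (CHAR('a) ^ card Z) L (gen_field (L \<union> Z))"
  using Z
proof (induction Z rule: finite_induct)
  case empty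
  then show ?case
    using K.dimension_one[OF subfield_ambient_ring[OF L]] gen_field_eq[OF L] by simp
next
  case (insert z Z)
  define M where "M = gen_field (L \<union> Z)"
  have M: "is_subfield M" and "L \<subseteq> M"
    unfolding M_def using is_subfield_gen_field gen_field_superset by blast+
  have dim_M: "K.dimension (CHAR('a) ^ card Z) L M"
    unfolding M_def using insert p_independent_subset[OF insert.prems(2)] by blast
  have "K.dimension CHAR('a) M (gen_field (insert z M))"
  proof (rule dimension_gen_field_insert[OF char_pos M])
    show "z ^ CHAR('a) \<in> M"
      using insert.prems(1) \<open>L \<subseteq> M\<close> by auto
    show "z \<notin> M"
      using insert.prems(2) insert.hyps(2) unfolding p_independent_def M_def by auto
  qed
  from K.telescopic_base[OF subfield_ambient_ring[OF L] subfield_ambient_ring[OF M] dim_M this]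
  have "K.dimension (CHAR('a) ^ card Z * CHAR('a)) L (gen_field (insert z M))" .
  moreover have "gen_field (insert z M) = gen_field (L \<union> insert z Z)"
    unfolding M_def using gen_field_Un_gen_field[of "L \<union> Z" "{z}"] by simp
  ultimately show ?case
    using insert.hyps by (simp add: mult.commute)
qed

lemma obtain_p_independent_subset:
  assumes "finite Z"
  obtains Z' where "Z' \<subseteq> Z" "gen_field (L \<union> Z') = gen_field (L \<union> Z)" "p_independent L Z'"
proof -
  let ?P = "\<lambda>Z'. Z' \<subseteq> Z \<and> gen_field (L \<union> Z') = gen_field (L \<union> Z)"
  obtain Z0 where Z0: "?P Z0" and least: "\<And>Z'. ?P Z' \<Longrightarrow> card Z0 \<le> card Z'"
    using ex_has_least_nat[of ?P Z card] by blast
  have "p_independent L Z0"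
    unfolding p_independent_def
  proof (rule ccontr)
    assume "\<not> (\<forall>z\<in>Z0. z \<notin> gen_field (L \<union> (Z0 - {z})))"
    then obtain z where z: "z \<in> Z0" "z \<in> gen_field (L \<union> (Z0 - {z}))" by blast
    have "gen_field (L \<union> Z0) = gen_field ((L \<union> (Z0 - {z})) \<union> {z})"
      using z(1) by (metis Un_insert_right insert_Diff sup_bot.right_neutral)
    also have "\<dots> = gen_field (L \<union> (Z0 - {z}))"
      by (rule gen_field_Un_absorb) (use z(2) in blast)
    finally have "card Z0 \<le> card (Z0 - {z})"
      using Z0 least[of "Z0 - {z}"] by auto
    moreover have "finite Z0"
      using Z0 assms finite_subset by blast
    ultimately show False
      using z(1) card_Diff1_less[of Z0 z] by simp
  qed
  then show ?thesis
    using Z0 that by blast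
qed

lemma obtain_dimension_gen_field_le:
  assumes char_pos: "CHAR('a::field) > 0" and L: "is_subfield (L::'a set)"
    and Z: "finite Z" "\<forall>z\<in>Z. z ^ CHAR('a) \<in> L"
  obtains m where "m \<le> card Z" "K.dimension (CHAR('a) ^ m) L (gen_field (L \<union> Z))"
proof -
  obtain Z' where Z': "Z' \<subseteq> Z" "gen_field (L \<union> Z') = gen_field (L \<union> Z)" "p_independent L Z'"
    using obtain_p_independent_subset[OF Z(1)] by blast
  have "K.dimension (CHAR('a) ^ card Z') L (gen_field (L \<union> Z'))"
    using dimension_gen_field_p_independent[OF char_pos L finite_subset[OF Z'(1) Z(1)]] Z Z'
    by blast
  moreover have "card Z' \<le> card Z"
    using Z'(1) Z(1) by (rule card_mono[rotated])
  ultimately show ?thesis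
    using Z'(2) that by auto
qed

lemma obtain_finite_generators_over_frob_pow_1:
  assumes fg: "fin_gen_over (\<Inter>n. frob_pow n :: 'a::field set)"
  obtains S where "finite S" "gen_field (frob_pow 1 \<union> S) = (UNIV :: 'a set)"
proof -
  obtain S :: "'a set" where S: "finite S" "gen_field ((\<Inter>n. frob_pow n) \<union> S) = UNIV"
    using fg unfolding fin_gen_over_def by blast
  have "(\<Inter>n. frob_pow n) \<union> S \<subseteq> frob_pow 1 \<union> S"
    by (intro Un_mono INT_lower) simp_all
  then have "gen_field (frob_pow 1 \<union> S) = UNIV"
    using gen_field_mono S(2) by blast
  with S(1) show ?thesis
    by (rule that)
qed

lemma obtain_finite_generators_if_finite_dimension:
  assumes F: "is_subfield F" "K.finite_dimension F UNIV" and W: "is_subfield W" "F \<subseteq> W"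
  obtains Y where "finite Y" "Y \<subseteq> W" "gen_field (F \<union> Y) = W"
proof -
  have "K.finite_dimension F W"
    using K.subalbegra_incl_imp_finite_dimension[OF subfield_ambient_ring[OF F(1)] F(2)
        subalgebra_ambient_ring[OF F(1) W]] by simp
  then obtain Us where Us: "set Us \<subseteq> carrier ambient_ring" "K.Span F Us = W"
    using K.exists_base[OF subfield_ambient_ring[OF F(1)]] by blast
  have "set Us \<subseteq> W"
    using K.Span_base_incl[OF subfield_ambient_ring[OF F(1)] Us(1)] Us(2) by blast
  moreover have "gen_field (F \<union> set Us) = W"
  proof
    show "gen_field (F \<union> set Us) \<subseteq> W"
      using gen_field_least[OF W(1)] W(2) \<open>set Us \<subseteq> W\<close> by blast
    have "subalgebra F (gen_field (F \<union> set Us)) ambient_ring"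
      using gen_field_superset by (intro subalgebra_ambient_ring F(1) is_subfield_gen_field) blast
    moreover have "set Us \<subseteq> gen_field (F \<union> set Us)"
      using gen_field_superset by blast
    ultimately show "W \<subseteq> gen_field (F \<union> set Us)"
      using K.subalgebra_Span_incl[OF subfield_ambient_ring[OF F(1)]] Us(2) by blast
  qed
  ultimately show ?thesis
    using that by blast
qed

lemma obtain_p_independent_generators:
  fixes W :: "'a::field set"
  assumes char_pos: "CHAR('a) > 0" and fg: "fin_gen_over (\<Inter>n. frob_pow n :: 'a set)"
    and W: "is_subfield W" "frob_pow 1 \<subseteq> W"
  obtains Y X where "finite Y" "p_independent (frob_pow 1) Y" "gen_field (frob_pow 1 \<union> Y) = W"
    "finite X" "p_independent W X" "gen_field (W \<union> X) = UNIV"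
proof -
  have Kp: "is_subfield (frob_pow 1 :: 'a set)"
    by (rule is_subfield_frob_pow_1[OF char_pos])
  obtain S :: "'a set" where S: "finite S" "gen_field (frob_pow 1 \<union> S) = UNIV"
    using obtain_finite_generators_over_frob_pow_1[OF fg] .
  have "\<forall>z\<in>S. z ^ CHAR('a) \<in> frob_pow 1"
    using power_CHAR_in_frob_pow_1[OF char_pos] by blast
  then obtain m where "K.dimension (CHAR('a) ^ m) (frob_pow 1) (gen_field (frob_pow 1 \<union> S))"
    using obtain_dimension_gen_field_le[OF char_pos Kp S(1)] by blast
  then have "K.finite_dimension (frob_pow 1) (UNIV :: 'a set)"
    unfolding S(2) by (rule K.finite_dimensionI)
  then obtain Y0 where "finite Y0" "gen_field (frob_pow 1 \<union> Y0) = W"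
    using obtain_finite_generators_if_finite_dimension[OF Kp _ W] by blast
  then obtain Y where Y: "finite Y" "p_independent (frob_pow 1) Y" "gen_field (frob_pow 1 \<union> Y) = W"
    using obtain_p_independent_subset[of Y0 "frob_pow 1"] finite_subset by metis
  have "gen_field (W \<union> S) = UNIV"
    using S(2) gen_field_mono[of "frob_pow 1 \<union> S" "W \<union> S"] W(2) by blast
  then obtain X where "finite X" "p_independent W X" "gen_field (W \<union> X) = UNIV"
    using obtain_p_independent_subset[OF S(1), of W] S(1) finite_subset by metis
  with Y show ?thesis
    using that by blast
qed

section \<open>Descending from \<open>K\<^sup>p\<close> to \<open>K\<^sup>p\<^sup>2\<close>\<close>

lemma dimension_frob_pow_2:
  assumes char_pos: "CHAR('a::field) > 0" and W: "is_subfield (W :: 'a set)"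
    and dim_W: "K.dimension n (frob_pow 1) W" and dim_K: "K.dimension m W UNIV"
  shows "K.dimension (n * m * n) (frob_pow 2) W"
proof -
  have Kp: "is_subfield (frob_pow 1 :: 'a set)"
    by (rule is_subfield_frob_pow_1[OF char_pos])
  have "K.dimension (n * m) (frob_pow 1) (UNIV :: 'a set)"
    by (rule K.telescopic_base[OF subfield_ambient_ring[OF Kp] subfield_ambient_ring[OF W]
          dim_W dim_K])
  from dimension_frob_image[OF char_pos Kp this]
  have "K.dimension (n * m) (frob_pow 2) (frob_pow 1 :: 'a set)"
    by (simp only: frob_pow_2_eq[OF char_pos] frob_pow_1_eq[OF char_pos])
  then show ?thesis
    using K.telescopic_base[OF subfield_ambient_ring[OF is_subfield_frob_pow_2[OF char_pos]]
        subfield_ambient_ring[OF Kp] _ dim_W] by blast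
qed

lemma gen_field_frob_pow_2_Un_frob_image:
  fixes W Y X :: "'a::field set"
  assumes char_pos: "CHAR('a) > 0"
    and W: "gen_field (frob_pow 1 \<union> Y) = W" and K: "gen_field (W \<union> X) = UNIV"
  shows "gen_field (gen_field (frob_pow 2 \<union> Y) \<union> frob ` X) = W"
proof -
  let ?G = "gen_field (frob_pow 2 \<union> Y \<union> frob ` X)"
  have "frob_pow 1 = frob ` gen_field (frob_pow 1 \<union> Y \<union> X)"
    using K W gen_field_Un_gen_field[of "frob_pow 1 \<union> Y" X] frob_pow_1_eq[OF char_pos] by simp
  also have "\<dots> = gen_field (frob_pow 2 \<union> frob ` Y \<union> frob ` X)"
    by (simp add: frob_image_gen_field[OF char_pos] image_Un frob_pow_2_eq[OF char_pos])
  also have "\<dots> \<subseteq> ?G"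
  proof (rule gen_field_least[OF is_subfield_gen_field])
    have gens: "frob_pow 2 \<union> Y \<union> frob ` X \<subseteq> ?G"
      by (rule gen_field_superset)
    then have "frob ` Y \<subseteq> ?G"
      unfolding frob_def using is_subfield_power[OF is_subfield_gen_field] by blast
    with gens show "frob_pow 2 \<union> frob ` Y \<union> frob ` X \<subseteq> ?G"
      by blast
  qed
  finally have "frob_pow 1 \<subseteq> ?G" .
  moreover have "Y \<subseteq> ?G"
    using gen_field_superset[of "frob_pow 2 \<union> Y \<union> frob ` X"] by blast
  ultimately have "frob_pow 1 \<union> Y \<subseteq> ?G"
    by (rule Un_least)
  then have "W \<subseteq> ?G"
    unfolding W[symmetric] by (rule gen_field_least[OF is_subfield_gen_field])
  moreover have "?G \<subseteq> W"
  proof (intro gen_field_least Un_least)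
    show "is_subfield W"
      using W is_subfield_gen_field by blast
    have "frob_pow 1 \<subseteq> W" "Y \<subseteq> W"
      using W gen_field_superset by blast+
    then show "frob_pow 2 \<subseteq> W" "Y \<subseteq> W" "frob ` X \<subseteq> W"
      using frob_pow_2_subset_frob_pow_1[OF char_pos] frob_pow_1_eq[OF char_pos] by blast+
  qed
  ultimately show ?thesis
    by (simp add: gen_field_Un_gen_field)
qed

lemma gen_field_frob_image_Un:
  fixes W Y :: "'a::field set"
  assumes char_pos: "CHAR('a) > 0" and W: "gen_field (frob_pow 1 \<union> Y) = W"
  shows "gen_field (frob ` W \<union> Y) = gen_field (frob_pow 2 \<union> Y)"
proof -
  have "frob ` W = gen_field (frob_pow 2 \<union> frob ` Y)"
    unfolding W[symmetric] frob_image_gen_field[OF char_pos] image_Un frob_pow_2_eq[OF char_pos] ..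
  then have "gen_field (frob ` W \<union> Y) = gen_field ((frob_pow 2 \<union> Y) \<union> frob ` Y)"
    by (simp only: gen_field_Un_gen_field) (simp only: Un_ac)
  also have "\<dots> = gen_field (frob_pow 2 \<union> Y)"
  proof (rule gen_field_Un_absorb)
    show "frob ` Y \<subseteq> gen_field (frob_pow 2 \<union> Y)"
      unfolding frob_def using gen_field_superset[of "frob_pow 2 \<union> Y"]
        is_subfield_power[OF is_subfield_gen_field] by blast
  qed
  finally show ?thesis .
qed

lemma composite_gen_field_frob_pow_2:
  fixes W Y :: "'a::field set"
  assumes char_pos: "CHAR('a) > 0" and W: "gen_field (frob_pow 1 \<union> Y) = W"
  shows "composite (gen_field (frob_pow 2 \<union> Y)) (frob_pow 1) = W"
proof -
  have "frob_pow 2 \<union> Y \<union> frob_pow 1 = frob_pow 1 \<union> Y"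
    using frob_pow_2_subset_frob_pow_1[OF char_pos] by blast
  then show ?thesis
    unfolding composite_def gen_field_Un_gen_field using W by simp
qed

lemma dimension_power_tower_step:
  fixes W Y X :: "'a::field set"
  assumes char_pos: "CHAR('a) > 0"
    and Y: "finite Y" "p_independent (frob_pow 1) Y" "gen_field (frob_pow 1 \<union> Y) = W"
    and X: "finite X" "p_independent W X" "gen_field (W \<union> X) = UNIV"
  shows "K.dimension (CHAR('a) ^ card X) (gen_field (frob_pow 2 \<union> Y)) W"
proof -
  let ?p = "CHAR('a)"
  define W2 where "W2 = gen_field (frob_pow 2 \<union> Y)"
  have Kp: "is_subfield (frob_pow 1 :: 'a set)" and Kpp: "is_subfield (frob_pow 2 :: 'a set)"
    using is_subfield_frob_pow_1[OF char_pos] is_subfield_frob_pow_2[OF char_pos] .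
  have W: "is_subfield W" "frob_pow 1 \<subseteq> W" "Y \<subseteq> W"
    using Y(3) is_subfield_gen_field gen_field_superset by blast+
  have W2: "is_subfield W2"
    unfolding W2_def by (rule is_subfield_gen_field)
  have M: "is_subfield (frob ` W)"
    using is_subfield_frob_image[OF char_pos W(1)] .
  have pow: "x ^ ?p \<in> frob_pow 1" for x :: 'a
    by (rule power_CHAR_in_frob_pow_1[OF char_pos])
  have dim_W: "K.dimension (?p ^ card Y) (frob_pow 1) W"
    using dimension_gen_field_p_independent[OF char_pos Kp Y(1) _ Y(2)] Y(3) pow by simp
  have dim_K: "K.dimension (?p ^ card X) W UNIV"
    using dimension_gen_field_p_independent[OF char_pos W(1) X(1) _ X(2)] X(3) pow W(2) by auto
  have dim_M: "K.dimension (?p ^ card Y) (frob_pow 2) (frob ` W)"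
    using dimension_frob_image[OF char_pos Kp dim_W] frob_pow_2_eq[OF char_pos] by simp
  have "gen_field (frob ` W \<union> Y) = W2"
    unfolding W2_def by (rule gen_field_frob_image_Un[OF char_pos Y(3)])
  moreover have "\<forall>y\<in>Y. y ^ ?p \<in> frob ` W"
    using W(3) unfolding frob_def by blast
  ultimately obtain m where m: "m \<le> card Y" "K.dimension (?p ^ m) (frob ` W) W2"
    using obtain_dimension_gen_field_le[OF char_pos M Y(1)] by metis
  have "\<forall>z\<in>frob ` X. z ^ ?p \<in> W2"
    using frob_pow_2_eq[OF char_pos] frob_pow_1_eq[OF char_pos] gen_field_superset
    unfolding W2_def frob_def by blast
  moreover have "gen_field (W2 \<union> frob ` X) = W"
    unfolding W2_def by (rule gen_field_frob_pow_2_Un_frob_image[OF char_pos Y(3) X(3)])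
  ultimately obtain m' where m': "m' \<le> card (frob ` X)" "K.dimension (?p ^ m') W2 W"
    using obtain_dimension_gen_field_le[OF char_pos W2 finite_imageI[OF X(1)]] by metis
  have "m' \<le> card X"
    using m'(1) card_image_le[OF X(1), of frob] by linarith
  have "K.dimension (?p ^ card Y * ?p ^ m * ?p ^ m') (frob_pow 2) W"
    using K.telescopic_base[OF subfield_ambient_ring[OF Kpp] subfield_ambient_ring[OF W2]
        K.telescopic_base[OF subfield_ambient_ring[OF Kpp] subfield_ambient_ring[OF M] dim_M m(2)]
        m'(2)] .
  then have "?p ^ card Y * ?p ^ m * ?p ^ m' = ?p ^ card Y * ?p ^ card X * ?p ^ card Y"
    using K.dimension_is_inj[OF subfield_ambient_ring[OF Kpp]]
      dimension_frob_pow_2[OF char_pos W(1) dim_W dim_K] by blast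
  then have "card Y + m + m' = card Y + card X + card Y"
    using prime_gt_1_nat[OF prime_CHAR_semidom[OF char_pos]] by (simp flip: power_add)
  then have "m' = card X"
    using m(1) \<open>m' \<le> card X\<close> by linarith
  then show ?thesis
    using m'(2) unfolding W2_def by simp
qed

theorem mainTheorem13:
  fixes W1 :: "'a::field set"
  assumes char_pos: "CHAR('a) > 0"
    and fg: "fin_gen_over (\<Inter>n. frob_pow n :: 'a set)"
    and W1_sub: "is_subfield W1"
    and W1_ge: "frob_pow 1 \<subseteq> W1"
  shows "\<exists>W2. is_subfield W2 \<and> W2 \<subseteq> W1 \<and> frob_pow 2 \<subseteq> W2 \<and>
              composite W2 (frob_pow 1) = W1 \<and>
              ext_degree W1 W2 = ext_degree UNIV W1"
proof -
  obtain Y X where Y: "finite Y" "p_independent (frob_pow 1) Y" "gen_field (frob_pow 1 \<union> Y) = W1"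
    and X: "finite X" "p_independent W1 X" "gen_field (W1 \<union> X) = UNIV"
    by (rule obtain_p_independent_generators[OF char_pos fg W1_sub W1_ge])
  define W2 where "W2 = gen_field (frob_pow 2 \<union> Y)"
  have W2: "is_subfield W2" "frob_pow 2 \<subseteq> W2"
    unfolding W2_def using is_subfield_gen_field gen_field_superset by blast+
  have composite: "composite W2 (frob_pow 1) = W1"
    unfolding W2_def by (rule composite_gen_field_frob_pow_2[OF char_pos Y(3)])
  then have "W2 \<subseteq> W1"
    unfolding composite_def using gen_field_superset by blast
  have "\<forall>z\<in>X. z ^ CHAR('a) \<in> W1"
    using W1_ge power_CHAR_in_frob_pow_1[OF char_pos] by blast
  then have "K.dimension (CHAR('a) ^ card X) W1 UNIV"
    using dimension_gen_field_p_independent[OF char_pos W1_sub X(1) _ X(2)] X(3) by simp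
  then have "ext_degree UNIV W1 = enat (CHAR('a) ^ card X)"
    by (rule ext_degree_eqI[OF W1_sub])
  moreover have "ext_degree W1 W2 = enat (CHAR('a) ^ card X)"
    unfolding W2_def by (rule ext_degree_eqI[OF is_subfield_gen_field
          dimension_power_tower_step[OF char_pos Y X]])
  ultimately show ?thesis
    using W2 composite \<open>W2 \<subseteq> W1\<close> by metis
qed

end
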